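(* The function $\omega(x)\,p_+(x)^7$ is increasing on the interval $[1,5]$.
   Context: For $x\ge1$ let $\psi_1(x)=\frac32\int_0^{\pi/2}(1-x^{-2}\sin^2u)^{3/2}\,du$, $\psi_2(x)=\frac32(1-x^{-2})^2\int_0^{\pi/2}\frac{\sin^4v}{\sqrt{1-(1-x^{-2})\sin^2v}}\,dv$, $\omega(x)=\psi_2'(x)\psi_1(x)-\psi_2(x)\psi_1'(x)$ and $p_+(x)=\sqrt{\psi_1(x)^2+\psi_2(x)^2}$. *)

theory Defs
  imports "HOL-Analysis.Analysis"
begin

definition psi1 :: "real \<Rightarrow> real" where
  "psi1 x = 3/2 * integral {0..pi/2} (\<lambda>u. (1 - (sin u)\<^sup>2 / x\<^sup>2) powr (3/2))"

definition psi2 :: "real \<Rightarrow> real" where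
  "psi2 x = 3/2 * (1 - 1 / x\<^sup>2)\<^sup>2 *
     integral {0..pi/2} (\<lambda>v. (sin v) ^ 4 / sqrt (1 - (1 - 1 / x\<^sup>2) * (sin v)\<^sup>2))"

text \<open>Derivatives are taken for the functions on their domain x \<ge> 1
  (so at x = 1 this is the right derivative).\<close>
definition omega :: "real \<Rightarrow> real" where
  "omega x = vector_derivative psi2 (at x within {1..}) * psi1 x
             - psi2 x * vector_derivative psi1 (at x within {1..})"

definition pplus :: "real \<Rightarrow> real" where
  "pplus x = sqrt ((psi1 x)\<^sup>2 + (psi2 x)\<^sup>2)"

end

(*
  Substituting m = 1/x^2 turns psi1 and psi2 into 3/2 times two solutions phi1, phi2 of the
  hypergeometric equation m (1 - m) y'' + y' + 3/4 y = 0: both are built from the moments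
  \<integral> sin^j u (1 - m sin^2 u)^a du over [0, pi/2], whose m-derivatives are again such moments,
  and the equation follows from one integration by parts. By Abel's identity the Wronskian is
  K (1 - m) / m, hence omega x = C (x^2 - 1) / x^3 with C = 9K/2; elementary bounds for the
  moments at m = 0.999 give C \<ge> 3.

  The derivative of omega * pplus^7 then has the sign of
  (3 - x^2) pplus^2 + 7 x (x^2 - 1) (psi1 psi1' + psi2 psi2'). Multiplying by psi1 and using
  omega = psi2' psi1 - psi2 psi1' reduces this to
  (x^2 - 3) pplus^2 psi1 \<le> 7 C (x^2 - 1)^2 / x^2 psi2, which is trivial for x^2 \<le> 3 and is
  verified on eleven subintervals of [sqrt 3, 5] from bounds on psi1, psi2 that are monotone in x.
*)
theory Submission
  imports Defs
begin

section \<open>The moments \<open>\<integral> sin u ^ j (1 - m sin\<^sup>2 u) ^ a\<close>\<close>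

definition elliptic_moment :: "nat \<Rightarrow> real \<Rightarrow> real \<Rightarrow> real" where
  "elliptic_moment j a m = integral {0..pi/2} (\<lambda>u. sin u ^ j * (1 - m * (sin u)\<^sup>2) powr a)"

lemma one_minus_mult_sin_sq_pos:
  fixes m u :: real
  assumes "\<bar>m\<bar> < 1"
  shows "0 < 1 - m * (sin u)\<^sup>2"
proof -
  have "\<bar>m * (sin u)\<^sup>2\<bar> \<le> \<bar>m\<bar>"
    using abs_sin_le_one[of u] by (simp add: abs_mult mult_left_le abs_square_le_1)
  with assms show ?thesis by linarith
qed

lemma has_integral_elliptic_moment:
  assumes "\<bar>m\<bar> < 1"
  shows "((\<lambda>u. sin u ^ j * (1 - m * (sin u)\<^sup>2) powr a) has_integral elliptic_moment j a m) {0..pi/2}"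
proof -
  have "continuous_on {0..pi/2} (\<lambda>u. sin u ^ j * (1 - m * (sin u)\<^sup>2) powr a)"
    using one_minus_mult_sin_sq_pos[OF assms]
    by (intro continuous_intros) (auto simp: less_imp_neq[symmetric] dest: sym)
  then show ?thesis
    unfolding elliptic_moment_def by (intro integrable_integral integrable_continuous_interval)
qed

lemma elliptic_moment_shift:
  assumes "\<bar>m\<bar> < 1"
  shows "elliptic_moment j a m = elliptic_moment j (a - 1) m - m * elliptic_moment (j + 2) (a - 1) m"
proof -
  have "sin u ^ j * (1 - m * (sin u)\<^sup>2) powr a
      = sin u ^ j * (1 - m * (sin u)\<^sup>2) powr (a - 1) - m * (sin u ^ (j + 2) * (1 - m * (sin u)\<^sup>2) powr (a - 1))"
    for u
  proof -
    have e: "(1 - m * (sin u)\<^sup>2) powr a = (1 - m * (sin u)\<^sup>2) powr (a - 1) * (1 - m * (sin u)\<^sup>2)"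
      using powr_add[of "1 - m * (sin u)\<^sup>2" "a - 1" 1] one_minus_mult_sin_sq_pos[OF assms, of u] by simp
    show ?thesis unfolding e by (simp add: algebra_simps power_add power2_eq_square)
  qed
  moreover have "((\<lambda>u. sin u ^ j * (1 - m * (sin u)\<^sup>2) powr (a - 1)
        - m * (sin u ^ (j + 2) * (1 - m * (sin u)\<^sup>2) powr (a - 1)))
      has_integral (elliptic_moment j (a - 1) m - m * elliptic_moment (j + 2) (a - 1) m)) {0..pi/2}"
    by (intro has_integral_diff has_integral_mult_right has_integral_elliptic_moment assms)
  ultimately show ?thesis
    using has_integral_unique[OF has_integral_elliptic_moment[OF assms, of j a]] by simp
qed

lemma has_derivative_sin_power_cos_powr:
  assumes "\<bar>m\<bar> < 1"
  defines "q \<equiv> \<lambda>u. 1 - m * (sin u)\<^sup>2"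
  shows "((\<lambda>u. sin u ^ (j + 1) * cos u * q u powr a) has_real_derivative
      (real j + 1) * (sin u ^ j * q u powr a) - (real j + 2) * (sin u ^ (j + 2) * q u powr a)
      - 2 * a * m * (sin u ^ (j + 2) * q u powr (a - 1) - sin u ^ (j + 4) * q u powr (a - 1))) (at u)"
proof -
  have q: "0 < q u" unfolding q_def by (rule one_minus_mult_sin_sq_pos[OF assms(1)])
  have d_sin: "((\<lambda>u. sin u ^ (j + 1)) has_real_derivative real (j + 1) * sin u ^ j * cos u) (at u)"
    using DERIV_chain2[OF DERIV_pow DERIV_sin, of "j + 1" u] by simp
  have d_q: "(q has_real_derivative - (m * (2 * sin u * cos u))) (at u)"
    unfolding q_def by (auto intro!: derivative_eq_intros)
  from DERIV_mult[OF DERIV_mult[OF d_sin DERIV_cos] DERIV_fun_powr[OF d_q q, of a]]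
  show ?thesis
  proof (rule DERIV_cong)
    define s c S where "s = sin u" and "c = cos u" and "S = sin u ^ j"
    have pow: "sin u ^ (j + 1) = S * s" "sin u ^ (j + 2) = S * s\<^sup>2" "sin u ^ (j + 4) = S * s ^ 4"
      by (simp_all add: s_def S_def power_add power2_eq_square)
    have "(real (j + 1) * S * c * c + - s * (S * s)) * q u powr a
        + a * q u powr (a - 1) * - (m * (2 * s * c)) * (S * s * c)
        - ((real j + 1) * (S * q u powr a) - (real j + 2) * (S * s\<^sup>2 * q u powr a)
           - 2 * a * m * (S * s\<^sup>2 * q u powr (a - 1) - S * s ^ 4 * q u powr (a - 1)))
        = ((real j + 1) * S * q u powr a - 2 * a * m * S * s\<^sup>2 * q u powr (a - 1)) * (s\<^sup>2 + c\<^sup>2 - 1)"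
      by (simp add: algebra_simps power2_eq_square power4_eq_xxxx)
    moreover have "s\<^sup>2 + c\<^sup>2 = 1" by (simp add: s_def c_def)
    ultimately show "(real (j + 1) * sin u ^ j * cos u * cos u + - sin u * sin u ^ (j + 1)) * q u powr a
        + a * q u powr (a - real 1) * - (m * (2 * sin u * cos u)) * (sin u ^ (j + 1) * cos u)
      = (real j + 1) * (sin u ^ j * q u powr a) - (real j + 2) * (sin u ^ (j + 2) * q u powr a)
        - 2 * a * m * (sin u ^ (j + 2) * q u powr (a - 1) - sin u ^ (j + 4) * q u powr (a - 1))"
      unfolding pow by (simp add: s_def c_def S_def)
  qed
qed

text \<open>\<open>sin u ^ (j + 1) * cos u\<close> vanishes at both ends of \<open>[0, pi/2]\<close>, so the derivative
  above integrates to zero.\<close>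
lemma elliptic_moment_parts:
  assumes "\<bar>m\<bar> < 1"
  shows "(real j + 1) * elliptic_moment j a m - (real j + 2) * elliptic_moment (j + 2) a m
       = 2 * a * m * (elliptic_moment (j + 2) (a - 1) m - elliptic_moment (j + 4) (a - 1) m)"
proof -
  define g where "g u = sin u ^ (j + 1) * cos u * (1 - m * (sin u)\<^sup>2) powr a" for u
  define h where "h u = (real j + 1) * (sin u ^ j * (1 - m * (sin u)\<^sup>2) powr a)
      - (real j + 2) * (sin u ^ (j + 2) * (1 - m * (sin u)\<^sup>2) powr a)
      - 2 * a * m * (sin u ^ (j + 2) * (1 - m * (sin u)\<^sup>2) powr (a - 1)
                     - sin u ^ (j + 4) * (1 - m * (sin u)\<^sup>2) powr (a - 1))" for u
  have "(g has_real_derivative h u) (at u)" for u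
    unfolding g_def h_def by (rule has_derivative_sin_power_cos_powr[OF assms])
  then have "(h has_integral (g (pi/2) - g 0)) {0..pi/2}"
    by (intro fundamental_theorem_of_calculus)
       (auto simp: has_real_derivative_iff_has_vector_derivative[symmetric]
             intro: has_field_derivative_at_within)
  then have h0: "(h has_integral 0) {0..pi/2}" by (simp add: g_def)
  have "(h has_integral ((real j + 1) * elliptic_moment j a m - (real j + 2) * elliptic_moment (j + 2) a m
      - 2 * a * m * (elliptic_moment (j + 2) (a - 1) m - elliptic_moment (j + 4) (a - 1) m))) {0..pi/2}"
    unfolding h_def by (intro has_integral_diff has_integral_mult_right has_integral_elliptic_moment assms)
  from has_integral_unique[OF this h0] show ?thesis by simp
qed

lemma elliptic_moment_has_derivative:
  assumes "\<bar>m\<bar> < 1"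
  shows "(elliptic_moment j a has_real_derivative - a * elliptic_moment (j + 2) (a - 1) m) (at m)"
proof -
  let ?U = "{-1<..<(1::real)}"
  let ?f = "\<lambda>m u. sin u ^ j * (1 - m * (sin u)\<^sup>2) powr a"
  let ?fm = "\<lambda>m u. - a * (sin u ^ (j + 2) * (1 - m * (sin u)\<^sup>2) powr (a - 1))"
  have "((\<lambda>m. integral (cbox 0 (pi/2)) (?f m)) has_field_derivative integral (cbox 0 (pi/2)) (?fm m))
      (at m within ?U)"
  proof (rule leibniz_rule_field_derivative)
    fix x t assume x: "x \<in> ?U"
    have "0 < 1 - x * (sin t)\<^sup>2" using x by (intro one_minus_mult_sin_sq_pos) auto
    then show "((\<lambda>x. ?f x t) has_field_derivative ?fm x t) (at x within ?U)"
      by (auto intro!: derivative_eq_intros simp: power2_eq_square)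
  next
    fix x assume "x \<in> ?U"
    then show "?f x integrable_on cbox 0 (pi/2)"
      using has_integral_elliptic_moment[of x] by (auto simp: abs_less_iff)
  next
    show "continuous_on (?U \<times> cbox 0 (pi/2)) (\<lambda>(x, t). ?fm x t)"
      unfolding case_prod_unfold
    proof (intro continuous_intros ballI)
      fix p assume "p \<in> ?U \<times> cbox 0 (pi/2)"
      then have "\<bar>fst p\<bar> < 1" by (auto simp: abs_less_iff)
      from one_minus_mult_sin_sq_pos[OF this, of "snd p"] show "1 - fst p * (sin (snd p))\<^sup>2 \<noteq> 0" by simp
    qed
  qed (use assms in auto)
  moreover have "at m within ?U = at m" using assms by (intro at_within_open) (auto simp: abs_less_iff)
  ultimately show ?thesis
    by (simp add: elliptic_moment_def[abs_def])
qed

lemma elliptic_moment_has_derivative_chain [derivative_intros]: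
  "(f has_real_derivative f') (at x within S) \<Longrightarrow> \<bar>f x\<bar> < 1 \<Longrightarrow>
   ((\<lambda>x. elliptic_moment j a (f x)) has_real_derivative - a * elliptic_moment (j + 2) (a - 1) (f x) * f')
     (at x within S)"
  by (rule DERIV_chain2[OF elliptic_moment_has_derivative])

lemma elliptic_moment_nonneg:
  assumes "\<bar>m\<bar> < 1"
  shows "0 \<le> elliptic_moment j a m"
  by (rule has_integral_nonneg[OF has_integral_elliptic_moment[OF assms]])
     (auto intro!: mult_nonneg_nonneg zero_le_power sin_ge_zero)

lemma has_integral_sin_power: "((\<lambda>u. sin u ^ j) has_integral elliptic_moment j 0 0) {0..pi/2}"
  using has_integral_elliptic_moment[of 0 j 0] by simp

lemma has_integral_sin_power_even:
  "((\<lambda>u. 1) has_integral pi/2) {0..pi/2}"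
  "((\<lambda>u. sin u ^ 2) has_integral pi/4) {0..pi/2}"
  "((\<lambda>u. sin u ^ 4) has_integral 3*pi/16) {0..pi/2}"
  "((\<lambda>u. sin u ^ 6) has_integral 5*pi/32) {0..pi/2}"
proof -
  have step: "elliptic_moment (j + 2) 0 0 = (real j + 1) / (real j + 2) * elliptic_moment j 0 0" for j
    using elliptic_moment_parts[of 0 j 0] by (simp add: field_simps)
  have 0: "elliptic_moment 0 0 0 = pi/2"
    using has_integral_unique[OF has_integral_sin_power[of 0, unfolded power_0] has_integral_const_real]
    by simp
  have 2: "elliptic_moment 2 0 0 = pi/4" using step[of 0] 0 by (simp add: numeral_2_eq_2)
  have 4: "elliptic_moment 4 0 0 = 3*pi/16" using step[of 2] 2 by simp
  have 6: "elliptic_moment 6 0 0 = 5*pi/32" using step[of 4] 4 by simp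
  show "((\<lambda>u. 1) has_integral pi/2) {0..pi/2}"
    using has_integral_sin_power[of 0] unfolding 0 by simp
  show "((\<lambda>u. sin u ^ 2) has_integral pi/4) {0..pi/2}"
    "((\<lambda>u. sin u ^ 4) has_integral 3*pi/16) {0..pi/2}"
    "((\<lambda>u. sin u ^ 6) has_integral 5*pi/32) {0..pi/2}"
    using has_integral_sin_power[of 2] has_integral_sin_power[of 4] has_integral_sin_power[of 6]
    unfolding 2 4 6 by simp_all
qed

section \<open>Two solutions of \<open>m (1 - m) y'' + y' + 3/4 y = 0\<close>\<close>

definition phi1 :: "real \<Rightarrow> real" where
  "phi1 m = elliptic_moment 0 (3/2) m"

definition dphi1 :: "real \<Rightarrow> real" where
  "dphi1 m = - 3/2 * elliptic_moment 2 (1/2) m"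

definition ddphi1 :: "real \<Rightarrow> real" where
  "ddphi1 m = 3/4 * elliptic_moment 4 (-1/2) m"

definition phi2 :: "real \<Rightarrow> real" where
  "phi2 m = (1 - m)\<^sup>2 * elliptic_moment 4 (-1/2) (1 - m)"

definition dphi2 :: "real \<Rightarrow> real" where
  "dphi2 m = - (2 * (1 - m) * elliptic_moment 4 (-1/2) (1 - m)
               + (1 - m)\<^sup>2 / 2 * elliptic_moment 6 (-3/2) (1 - m))"

definition ddphi2 :: "real \<Rightarrow> real" where
  "ddphi2 m = 2 * elliptic_moment 4 (-1/2) (1 - m) + 2 * (1 - m) * elliptic_moment 6 (-3/2) (1 - m)
              + 3/4 * (1 - m)\<^sup>2 * elliptic_moment 8 (-5/2) (1 - m)"

lemma phi1_has_derivative: "\<bar>m\<bar> < 1 \<Longrightarrow> (phi1 has_real_derivative dphi1 m) (at m)"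
  unfolding phi1_def[abs_def] dphi1_def
  by (auto intro!: derivative_eq_intros simp: eval_nat_numeral)

lemma dphi1_has_derivative: "\<bar>m\<bar> < 1 \<Longrightarrow> (dphi1 has_real_derivative ddphi1 m) (at m)"
  unfolding dphi1_def[abs_def] ddphi1_def
  by (auto intro!: derivative_eq_intros simp: eval_nat_numeral)

lemma phi2_has_derivative: "0 < m \<Longrightarrow> m < 2 \<Longrightarrow> (phi2 has_real_derivative dphi2 m) (at m)"
  unfolding phi2_def[abs_def] dphi2_def
  by (auto intro!: derivative_eq_intros simp: field_simps eval_nat_numeral)

lemma dphi2_has_derivative:
  assumes "0 < m" "m < 2"
  shows "(dphi2 has_real_derivative ddphi2 m) (at m)"
  unfolding dphi2_def[abs_def] ddphi2_def using assms
  by (auto intro!: derivative_eq_intros simp: field_simps eval_nat_numeral)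

lemma phi1_ode:
  assumes "\<bar>m\<bar> < 1"
  shows "m * (1 - m) * ddphi1 m + dphi1 m + 3/4 * phi1 m = 0"
  using elliptic_moment_parts[OF assms, of 0 "1/2"]
    elliptic_moment_shift[OF assms, of 0 "3/2"] elliptic_moment_shift[OF assms, of 2 "1/2"]
  unfolding phi1_def dphi1_def ddphi1_def by (simp add: eval_nat_numeral) algebra

lemma phi2_ode:
  assumes "0 < m" "m < 2"
  shows "m * (1 - m) * ddphi2 m + dphi2 m + 3/4 * phi2 m = 0"
proof -
  define n where "n = 1 - m"
  have n: "\<bar>n\<bar> < 1" using assms by (auto simp: n_def)
  define B0 B1 B2 where "B0 = elliptic_moment 4 (-1/2) n" and "B1 = elliptic_moment 6 (-3/2) n"
    and "B2 = elliptic_moment 8 (-5/2) n"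
  have "elliptic_moment 4 (-3/2) n = B0 + n * B1" "elliptic_moment 6 (-5/2) n = B1 + n * B2"
    using elliptic_moment_shift[OF n, of 4 "-1/2"] elliptic_moment_shift[OF n, of 6 "-3/2"]
    by (simp_all add: B0_def B1_def B2_def)
  then have E: "5 * B0 - (6 - 8 * n) * B1 - 3 * n * (1 - n) * B2 = 0"
    using elliptic_moment_parts[OF n, of 4 "-3/2"] by (simp add: B1_def B2_def algebra_simps)
  have m: "m = 1 - n" by (simp add: n_def)
  have "m * (1 - m) * (2 * B0 + 2 * (1 - m) * B1 + 3/4 * (1 - m)\<^sup>2 * B2)
      - (2 * (1 - m) * B0 + (1 - m)\<^sup>2 / 2 * B1) + 3/4 * ((1 - m)\<^sup>2 * B0)
      = - n\<^sup>2 / 4 * (5 * B0 - (6 - 8 * n) * B1 - 3 * n * (1 - n) * B2)"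
    unfolding m by (simp add: field_simps power2_eq_square)
  with E show ?thesis
    unfolding phi2_def dphi2_def ddphi2_def n_def[symmetric]
      B0_def[symmetric] B1_def[symmetric] B2_def[symmetric]
    by simp
qed

lemma abel_wronskian:
  fixes y1 y2 dy1 dy2 :: "real \<Rightarrow> real"
  assumes "(y1 has_real_derivative dy1 t) (at t)" "(y2 has_real_derivative dy2 t) (at t)"
    and "(dy1 has_real_derivative ddy1) (at t)" "(dy2 has_real_derivative ddy2) (at t)"
    and "a * ddy1 + b * dy1 t + c * y1 t = 0" "a * ddy2 + b * dy2 t + c * y2 t = 0" "a \<noteq> 0"
  shows "((\<lambda>t. y1 t * dy2 t - y2 t * dy1 t) has_real_derivative
      - b / a * (y1 t * dy2 t - y2 t * dy1 t)) (at t)"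
proof -
  have "a * (y1 t * ddy2 - y2 t * ddy1) = - b * (y1 t * dy2 t - y2 t * dy1 t)"
    using assms(5,6) by algebra
  then have eq: "y1 t * ddy2 - y2 t * ddy1 = - b / a * (y1 t * dy2 t - y2 t * dy1 t)"
    using assms(7) by (simp add: field_simps)
  have "((\<lambda>t. y1 t * dy2 t - y2 t * dy1 t) has_real_derivative y1 t * ddy2 - y2 t * ddy1) (at t)"
    using assms(1-4) by (auto intro!: derivative_eq_intros simp: algebra_simps)
  then show ?thesis unfolding eq .
qed

definition wronskian :: "real \<Rightarrow> real" where
  "wronskian m = phi2 m * dphi1 m - phi1 m * dphi2 m"

lemma wronskian_has_derivative:
  assumes "0 < m" "m < 1"
  shows "(wronskian has_real_derivative - 1 / (m * (1 - m)) * wronskian m) (at m)"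
proof -
  have m: "\<bar>m\<bar> < 1" "m < 2" using assms by auto
  show ?thesis
    unfolding wronskian_def[abs_def]
  proof (rule abel_wronskian[OF phi2_has_derivative phi1_has_derivative dphi2_has_derivative
        dphi1_has_derivative, where b = 1 and c = "3/4"])
    show "m * (1 - m) * ddphi2 m + 1 * dphi2 m + 3/4 * phi2 m = 0"
      using phi2_ode[OF assms(1) m(2)] by simp
    show "m * (1 - m) * ddphi1 m + 1 * dphi1 m + 3/4 * phi1 m = 0"
      using phi1_ode[OF m(1)] by simp
  qed (use assms m in auto)
qed

lemma wronskian_eq: "\<exists>K. \<forall>m\<in>{0<..<1}. wronskian m = K * (1 - m) / m"
proof -
  have deriv: "((\<lambda>m. wronskian m * m / (1 - m)) has_real_derivative 0) (at m within {0<..<1})"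
    if m: "m \<in> {0<..<1}" for m
  proof -
    have nz: "m \<noteq> 0" "1 - m \<noteq> 0" using m by auto
    have "(wronskian has_real_derivative - 1 / (m * (1 - m)) * wronskian m) (at m)"
      using m by (intro wronskian_has_derivative) auto
    from DERIV_divide[OF DERIV_mult[OF this DERIV_ident] DERIV_diff[OF DERIV_const DERIV_ident] nz(2)]
    have "((\<lambda>m. wronskian m * m / (1 - m)) has_real_derivative 0) (at m)"
      by (rule DERIV_cong) (use nz in \<open>simp add: field_simps\<close>)
    then show ?thesis by (rule has_field_derivative_at_within)
  qed
  obtain K where K: "\<And>m. m \<in> {0<..<1} \<Longrightarrow> wronskian m * m / (1 - m) = K"
    using has_field_derivative_zero_constant[OF convex_real_interval(8) deriv] by blast
  show ?thesis
  proof (intro exI ballI)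
    fix m :: real assume "m \<in> {0<..<1}"
    with K[OF this] show "wronskian m = K * (1 - m) / m" by (auto simp: field_simps)
  qed
qed

section \<open>\<open>omega\<close> through the Wronskian\<close>

lemma powr_minus_half: "0 \<le> r \<Longrightarrow> r powr (-1/2) = 1 / sqrt r"
  by (cases "r = 0") (simp_all add: powr_minus_divide powr_half_sqrt)

lemma psi1_eq: "psi1 x = 3/2 * phi1 (1 / x\<^sup>2)"
  by (simp add: psi1_def phi1_def elliptic_moment_def field_simps)

lemma psi2_eq: "psi2 x = 3/2 * phi2 (1 / x\<^sup>2)"
proof -
  have "sin v ^ 4 / sqrt (1 - (1 - 1 / x\<^sup>2) * (sin v)\<^sup>2)
      = sin v ^ 4 * (1 - (1 - 1 / x\<^sup>2) * (sin v)\<^sup>2) powr (-1/2)" for v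
  proof -
    have "1 - (1 - 1 / x\<^sup>2) * (sin v)\<^sup>2 = (cos v)\<^sup>2 + (sin v)\<^sup>2 / x\<^sup>2"
      by (simp add: algebra_simps cos_squared_eq)
    then have "0 \<le> 1 - (1 - 1 / x\<^sup>2) * (sin v)\<^sup>2" by simp
    then show ?thesis by (subst powr_minus_half) simp_all
  qed
  then show ?thesis by (simp add: psi2_def phi2_def elliptic_moment_def)
qed

lemma psi1_has_derivative:
  assumes "1 < x"
  shows "(psi1 has_real_derivative - 3 / x ^ 3 * dphi1 (1 / x\<^sup>2)) (at x)"
proof -
  have "\<bar>1 / x\<^sup>2\<bar> < 1" using assms by (simp add: one_less_power)
  have "((\<lambda>x. 1 / x\<^sup>2) has_real_derivative - 2 / x ^ 3) (at x)"
    using assms by (auto intro!: derivative_eq_intros simp: field_simps eval_nat_numeral)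
  from DERIV_chain2[of phi1 "dphi1 (1 / x\<^sup>2)" "\<lambda>x. 1 / x\<^sup>2", OF phi1_has_derivative this]
  show ?thesis
    unfolding psi1_eq[abs_def] using \<open>\<bar>1 / x\<^sup>2\<bar> < 1\<close>
    by (auto intro!: derivative_eq_intros simp: field_simps)
qed

lemma psi2_has_derivative:
  assumes "1 \<le> x"
  shows "(psi2 has_real_derivative - 3 / x ^ 3 * dphi2 (1 / x\<^sup>2)) (at x)"
proof -
  have "1 \<le> x\<^sup>2" using assms by (simp add: one_le_power)
  then have "0 < 1 / x\<^sup>2" "1 / x\<^sup>2 < 2" by (auto simp: divide_less_eq)
  have "((\<lambda>x. 1 / x\<^sup>2) has_real_derivative - 2 / x ^ 3) (at x)"
    using assms by (auto intro!: derivative_eq_intros simp: field_simps eval_nat_numeral)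
  from DERIV_chain2[of phi2 "dphi2 (1 / x\<^sup>2)" "\<lambda>x. 1 / x\<^sup>2", OF phi2_has_derivative this]
  show ?thesis
    unfolding psi2_eq[abs_def] using \<open>0 < 1 / x\<^sup>2\<close> \<open>1 / x\<^sup>2 < 2\<close>
    by (auto intro!: derivative_eq_intros simp: field_simps)
qed

lemma vector_derivative_within_atLeast:
  fixes f :: "real \<Rightarrow> real"
  assumes "(f has_real_derivative D) (at x)" "a \<le> x"
  shows "vector_derivative f (at x within {a..}) = D"
proof (rule vector_derivative_within)
  have "x islimpt {x..x+1}" by simp
  then have "x islimpt {a..}" by (rule islimpt_subset) (use assms in auto)
  then show "at x within {a..} \<noteq> bot" by (simp add: trivial_limit_within)
  show "(f has_vector_derivative D) (at x within {a..})"
    using has_field_derivative_at_within[OF assms(1)] by (simp add: has_real_derivative_iff_has_vector_derivative)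
qed

text \<open>\<open>psi1\<close> has no derivative at \<open>x = 1\<close> (where \<open>m = 1\<close>), but the junk value of its
  vector derivative is multiplied by \<open>psi2 1 = 0\<close>.\<close>
lemma omega_1: "omega 1 = 0"
proof -
  have "psi2 1 = 0" "dphi2 1 = 0" by (simp_all add: psi2_eq phi2_def dphi2_def)
  then show ?thesis
    using vector_derivative_within_atLeast[OF psi2_has_derivative] by (simp add: omega_def)
qed

lemma omega_eq_wronskian:
  assumes "1 < x"
  shows "omega x = 9 / (2 * x ^ 3) * wronskian (1 / x\<^sup>2)"
proof -
  have vd: "vector_derivative psi1 (at x within {1..}) = - 3 / x ^ 3 * dphi1 (1 / x\<^sup>2)"
    "vector_derivative psi2 (at x within {1..}) = - 3 / x ^ 3 * dphi2 (1 / x\<^sup>2)"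
    using vector_derivative_within_atLeast[OF psi1_has_derivative[OF assms]]
      vector_derivative_within_atLeast[OF psi2_has_derivative] assms by auto
  have "x \<noteq> 0" using assms by simp
  then show ?thesis unfolding omega_def vd by (simp add: psi1_eq psi2_eq wronskian_def field_simps)
qed

section \<open>Elementary bounds and the constant in \<open>omega\<close>\<close>

lemma elliptic_moment_le:
  assumes "\<bar>m\<bar> < 1" "(g has_integral G) {0..pi/2}"
    and "\<And>u. u \<in> {0..pi/2} \<Longrightarrow> sin u ^ j * (1 - m * (sin u)\<^sup>2) powr a \<le> g u"
  shows "elliptic_moment j a m \<le> G"
  by (rule has_integral_le[OF has_integral_elliptic_moment[OF assms(1)] assms(2)]) (use assms(3) in auto)

lemma elliptic_moment_ge:
  assumes "\<bar>m\<bar> < 1" "(g has_integral G) {0..pi/2}"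
    and "\<And>u. u \<in> {0..pi/2} \<Longrightarrow> g u \<le> sin u ^ j * (1 - m * (sin u)\<^sup>2) powr a"
  shows "G \<le> elliptic_moment j a m"
  by (rule has_integral_le[OF assms(2) has_integral_elliptic_moment[OF assms(1)]]) (use assms(3) in auto)

lemma one_minus_mult_sin_sq_bounds:
  fixes m u :: real
  assumes "0 \<le> m"
  shows "1 - m \<le> 1 - m * (sin u)\<^sup>2" "1 - m * (sin u)\<^sup>2 \<le> 1"
proof -
  have "(sin u)\<^sup>2 \<le> 1" by (simp add: abs_square_le_1)
  from mult_left_mono[OF this assms] show "1 - m \<le> 1 - m * (sin u)\<^sup>2" by simp
  show "1 - m * (sin u)\<^sup>2 \<le> 1" using assms by simp
qed

lemma phi1_lower:
  assumes "0 \<le> m" "m < 1"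
  shows "pi/2 - m * (pi/2) + m\<^sup>2 * (3*pi/16) \<le> phi1 m"
  unfolding phi1_def
proof (rule elliptic_moment_ge)
  have half: "pi/2 - 2 * m * (pi/4) = pi/2 - m * (pi/2)" by simp
  have "((\<lambda>u. 1 - 2 * m * sin u ^ 2 + m\<^sup>2 * sin u ^ 4) has_integral
      (pi/2 - 2 * m * (pi/4) + m\<^sup>2 * (3*pi/16))) {0..pi/2}"
    by (intro has_integral_add has_integral_diff has_integral_mult_right has_integral_sin_power_even)
  then show "((\<lambda>u. 1 - 2 * m * sin u ^ 2 + m\<^sup>2 * sin u ^ 4) has_integral
      (pi/2 - m * (pi/2) + m\<^sup>2 * (3*pi/16))) {0..pi/2}"
    unfolding half .
  fix u
  have q: "0 < 1 - m * (sin u)\<^sup>2" "1 - m * (sin u)\<^sup>2 \<le> 1"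
    using one_minus_mult_sin_sq_pos[of m u] one_minus_mult_sin_sq_bounds[OF assms(1), of u] assms
    by auto
  have "1 - 2 * m * sin u ^ 2 + m\<^sup>2 * sin u ^ 4 = (1 - m * (sin u)\<^sup>2) powr 2"
    using q(1) by (simp add: powr_numeral power2_eq_square algebra_simps eval_nat_numeral)
  also have "\<dots> \<le> (1 - m * (sin u)\<^sup>2) powr (3/2)"
    using q by (intro powr_mono') auto
  finally show "1 - 2 * m * sin u ^ 2 + m\<^sup>2 * sin u ^ 4 \<le> sin u ^ 0 * (1 - m * (sin u)\<^sup>2) powr (3/2)"
    by simp
qed (use assms in auto)

lemma phi1_upper:
  assumes "0 \<le> m" "m < 1"
  shows "phi1 m \<le> pi/2 - m * (pi/4)"
  unfolding phi1_def
proof (rule elliptic_moment_le)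
  show "((\<lambda>u. 1 - m * sin u ^ 2) has_integral (pi/2 - m * (pi/4))) {0..pi/2}"
    by (intro has_integral_diff has_integral_mult_right has_integral_sin_power_even)
  fix u
  have q: "0 \<le> 1 - m * (sin u)\<^sup>2" "1 - m * (sin u)\<^sup>2 \<le> 1"
    using one_minus_mult_sin_sq_bounds[OF assms(1), of u] assms by auto
  have "(1 - m * (sin u)\<^sup>2) powr (3/2) \<le> (1 - m * (sin u)\<^sup>2) powr 1"
    using q by (intro powr_mono') auto
  then show "sin u ^ 0 * (1 - m * (sin u)\<^sup>2) powr (3/2) \<le> 1 - m * sin u ^ 2"
    using q by simp
qed (use assms in auto)

lemma dphi1_bounds:
  assumes "0 \<le> m" "m < 1"
  shows "- 3*pi/8 \<le> dphi1 m" "dphi1 m \<le> 0"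
proof -
  have "elliptic_moment 2 (1/2) m \<le> pi/4"
  proof (rule elliptic_moment_le[OF _ has_integral_sin_power_even(2)])
    fix u
    have "(1 - m * (sin u)\<^sup>2) powr (1/2) \<le> 1"
      using one_minus_mult_sin_sq_bounds[OF assms(1), of u] assms by (intro powr_le1) auto
    then show "sin u ^ 2 * (1 - m * (sin u)\<^sup>2) powr (1/2) \<le> sin u ^ 2"
      by (simp add: mult_left_le)
  qed (use assms in auto)
  then show "- 3*pi/8 \<le> dphi1 m" by (simp add: dphi1_def)
  show "dphi1 m \<le> 0" using elliptic_moment_nonneg[of m] assms by (simp add: dphi1_def)
qed

lemma inverse_sqrt_lower: "0 \<le> z \<Longrightarrow> z < 1 \<Longrightarrow> 1 + z/2 \<le> (1 - z :: real) powr (-1/2)"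
proof -
  assume z: "0 \<le> z" "z < 1"
  have "(1 - z) * (1 + z/2)\<^sup>2 = 1 - 3/4 * z\<^sup>2 - z ^ 3 / 4"
    by (simp add: power2_eq_square power3_eq_cube field_simps)
  also have "\<dots> \<le> 1"
  proof -
    have "0 \<le> z\<^sup>2" "0 \<le> z ^ 3" using z by simp_all
    then show ?thesis by linarith
  qed
  finally have "sqrt ((1 - z) * (1 + z/2)\<^sup>2) \<le> 1" by simp
  then have "sqrt (1 - z) * (1 + z/2) \<le> 1" using z by (simp add: real_sqrt_mult)
  then show ?thesis using z by (subst powr_minus_half) (simp_all add: field_simps)
qed

lemma elliptic_moment_4_bounds:
  assumes "0 \<le> n" "n < 1"
  shows "3*pi/16 + n * (5*pi/64) \<le> elliptic_moment 4 (-1/2) n"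
    and "elliptic_moment 4 (-1/2) n \<le> 3*pi/16 / sqrt (1 - n)"
proof -
  have q: "1 - n \<le> 1 - n * (sin u)\<^sup>2" "0 \<le> n * (sin u)\<^sup>2" "n * (sin u)\<^sup>2 < 1" for u
    using one_minus_mult_sin_sq_bounds[OF assms(1), of u] assms by auto
  show "3*pi/16 + n * (5*pi/64) \<le> elliptic_moment 4 (-1/2) n"
  proof (rule elliptic_moment_ge)
    show "((\<lambda>u. sin u ^ 4 + n/2 * sin u ^ 6) has_integral (3*pi/16 + n * (5*pi/64))) {0..pi/2}"
      using has_integral_add[OF has_integral_sin_power_even(3)
          has_integral_mult_right[OF has_integral_sin_power_even(4), of "n/2"]] by simp
    fix u
    have "sin u ^ 4 * (1 + n * (sin u)\<^sup>2 / 2) \<le> sin u ^ 4 * (1 - n * (sin u)\<^sup>2) powr (-1/2)"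
      using inverse_sqrt_lower[OF q(2,3)] by (rule mult_left_mono) simp
    then show "sin u ^ 4 + n/2 * sin u ^ 6 \<le> sin u ^ 4 * (1 - n * (sin u)\<^sup>2) powr (-1/2)"
      by (simp add: algebra_simps eval_nat_numeral)
  qed (use assms in auto)
  show "elliptic_moment 4 (-1/2) n \<le> 3*pi/16 / sqrt (1 - n)"
  proof (rule elliptic_moment_le)
    show "((\<lambda>u. sin u ^ 4 / sqrt (1 - n)) has_integral 3*pi/16 / sqrt (1 - n)) {0..pi/2}"
      by (rule has_integral_divide[OF has_integral_sin_power_even(3)])
    fix u
    have "(1 - n * (sin u)\<^sup>2) powr (-1/2) \<le> (1 - n) powr (-1/2)"
      using q(1)[of u] assms by (intro powr_mono2') auto
    also have "\<dots> = 1 / sqrt (1 - n)" using assms by (intro powr_minus_half) simp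
    finally have "sin u ^ 4 * (1 - n * (sin u)\<^sup>2) powr (-1/2) \<le> sin u ^ 4 * (1 / sqrt (1 - n))"
      by (rule mult_left_mono) simp
    then show "sin u ^ 4 * (1 - n * (sin u)\<^sup>2) powr (-1/2) \<le> sin u ^ 4 / sqrt (1 - n)"
      by simp
  qed (use assms in auto)
qed

lemma wronskian_lower:
  assumes "0 < m" "m < 1"
  shows "pi\<^sup>2 * (3 * m / 16) * (5 * (1 - m) / 8 + 3 * m\<^sup>2 / 8) \<le> wronskian m * m / (1 - m)"
proof -
  define n where "n = 1 - m"
  define A B0 B1 where "A = phi1 m" and "B0 = elliptic_moment 4 (-1/2) n"
    and "B1 = elliptic_moment 6 (-3/2) n"
  have n: "0 < n" "n < 1" "\<bar>n\<bar> < 1" using assms by (auto simp: n_def)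
  have "pi * (n/2 + 3 * m\<^sup>2 / 16) = pi/2 - m * (pi/2) + m\<^sup>2 * (3*pi/16)"
    by (simp add: n_def field_simps)
  then have A: "pi * (n/2 + 3 * m\<^sup>2 / 16) \<le> A"
    using phi1_lower[of m] assms by (simp add: A_def)
  have "0 \<le> n * (5*pi/64)" using n by simp
  then have B0: "3*pi/16 \<le> B0"
    using elliptic_moment_4_bounds(1)[of n] n unfolding B0_def by linarith
  then have B0_nonneg: "0 \<le> B0" using pi_gt_zero by linarith
  have B1: "0 \<le> B1" using elliptic_moment_nonneg[OF n(3)] by (simp add: B1_def)
  have D1: "- 3*pi/8 \<le> dphi1 m" using dphi1_bounds(1)[of m] assms by simp
  have W: "wronskian m * m / (1 - m) = m * (n * B0 * dphi1 m + A * (2 * B0 + n / 2 * B1))"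
    using n unfolding wronskian_def phi2_def dphi2_def A_def B0_def B1_def n_def[symmetric]
    by (simp add: field_simps power2_eq_square)
  have "pi * (5 * n / 8 + 3 * m\<^sup>2 / 8) \<le> 2 * A - 3 * n * pi / 8"
    using A by (simp add: algebra_simps)
  then have main: "3*pi/16 * (pi * (5 * n / 8 + 3 * m\<^sup>2 / 8)) \<le> B0 * (2 * A - 3 * n * pi / 8)"
    using B0 B0_nonneg n by (intro mult_mono) auto
  have "pi\<^sup>2 * (3 * m / 16) * (5 * (1 - m) / 8 + 3 * m\<^sup>2 / 8)
      = m * (3*pi/16 * (pi * (5 * n / 8 + 3 * m\<^sup>2 / 8)))"
    by (simp add: n_def power2_eq_square)
  also have "\<dots> \<le> m * (B0 * (2 * A - 3 * n * pi / 8))"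
    using main assms by (intro mult_left_mono) auto
  also have "\<dots> \<le> m * (n * B0 * dphi1 m + A * (2 * B0 + n / 2 * B1))"
  proof -
    have "n * B0 * (- 3*pi/8) \<le> n * B0 * dphi1 m"
      using D1 B0_nonneg n by (intro mult_left_mono) auto
    moreover have "0 \<le> A * (n / 2 * B1)"
      using A B1 n pi_gt_zero assms by (intro mult_nonneg_nonneg) (auto intro: order_trans[rotated])
    ultimately show ?thesis using assms by (intro mult_left_mono) (auto simp: algebra_simps)
  qed
  also have "\<dots> = wronskian m * m / (1 - m)" by (rule W[symmetric])
  finally show ?thesis .
qed

lemma omega_closed_form: "\<exists>C \<ge> 3. \<forall>x > 1. omega x = C * (x\<^sup>2 - 1) / x ^ 3"
proof -
  obtain K where K: "\<And>m. m \<in> {0<..<1} \<Longrightarrow> wronskian m = K * (1 - m) / m"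
    using wronskian_eq by blast
  have "K = wronskian (999/1000) * (999/1000) / (1 - 999/1000)" using K[of "999/1000"] by simp
  moreover have "(3.14::real)\<^sup>2 \<le> pi\<^sup>2" using pi_approx by (intro power_mono) auto
  ultimately have "2/3 \<le> K"
    using wronskian_lower[of "999/1000"] by (simp add: power2_eq_square)
  moreover have "omega x = 9/2 * K * (x\<^sup>2 - 1) / x ^ 3" if "1 < x" for x
  proof -
    have "1 / x\<^sup>2 \<in> {0<..<1}" using that by simp
    moreover have "K * (1 - 1 / x\<^sup>2) / (1 / x\<^sup>2) = K * (x\<^sup>2 - 1)"
      using that by (simp add: field_simps)
    ultimately have "wronskian (1 / x\<^sup>2) = K * (x\<^sup>2 - 1)" using K by simp
    then show ?thesis using omega_eq_wronskian[OF that] by simp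
  qed
  ultimately show ?thesis by (intro exI[of _ "9/2 * K"]) auto
qed

lemma omega_nonneg: "1 \<le> x \<Longrightarrow> 0 \<le> omega x"
proof (cases "x = 1")
  case False
  assume "1 \<le> x"
  with False have "1 < x" by simp
  moreover obtain C where "3 \<le> C" "\<And>x. 1 < x \<Longrightarrow> omega x = C * (x\<^sup>2 - 1) / x ^ 3"
    using omega_closed_form by blast
  ultimately show ?thesis by (simp add: one_le_power)
qed (simp add: omega_1)

section \<open>The sign of the derivative of \<open>omega * pplus ^ 7\<close>\<close>

definition psi1_ub :: "real \<Rightarrow> real" where
  "psi1_ub x = 3/4 * (1 - 1 / (2 * x\<^sup>2))"

definition psi2_lb :: "real \<Rightarrow> real" where
  "psi2_lb x = 3/2 * (1 - 1 / x\<^sup>2)\<^sup>2 * (3/16 + 5/64 * (1 - 1 / x\<^sup>2))"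

definition psi2_ub :: "real \<Rightarrow> real" where
  "psi2_ub x = 9/32 * (1 - 1 / x\<^sup>2)\<^sup>2 * x"

text \<open>The last hypothesis of \<open>cubic_estimate\<close> (below) with \<open>31416/10000 > pi\<close> and the bounds of
  \<open>psi1\<close>, \<open>psi2\<close> taken at the ends of \<open>[x0, x1]\<close>.\<close>
definition cubic_certificate :: "real \<Rightarrow> real \<Rightarrow> bool" where
  "cubic_certificate x0 x1 \<longleftrightarrow>
     (31416/10000)\<^sup>2 * ((x1\<^sup>2 - 3) * psi1_ub x1 * (psi2_lb x0 * psi2_ub x1 + (psi1_ub x1)\<^sup>2))
       \<le> 21 * psi2_lb x0 * (x0 - 1 / x0)\<^sup>2"

definition cubic_breakpoints :: "real list" where
  "cubic_breakpoints = [173/100, 208/100, 245/100, 283/100, 322/100, 36/10,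
     395/100, 426/100, 453/100, 476/100, 495/100, 5]"

lemma cubic_breakpoints_certified:
  "\<forall>(l, u) \<in> set (zip cubic_breakpoints (tl cubic_breakpoints)). 1 < l \<and> cubic_certificate l u"
  by (simp add: cubic_breakpoints_def cubic_certificate_def psi1_ub_def psi2_lb_def psi2_ub_def
      power2_eq_square)

lemma psi1_bounds:
  assumes "1 < x"
  shows "0 < psi1 x" "psi1 x \<le> pi * psi1_ub x"
proof -
  have m: "0 \<le> 1 / x\<^sup>2" "1 / x\<^sup>2 < 1" using assms by auto
  have "0 < (1 - 1 / x\<^sup>2) * (pi/2) + (1 / x\<^sup>2)\<^sup>2 * (3*pi/16)"
    using m by (intro add_pos_nonneg) auto
  then show "0 < psi1 x"
    using phi1_lower[OF m] by (simp add: psi1_eq algebra_simps)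
  show "psi1 x \<le> pi * psi1_ub x"
    using phi1_upper[OF m] by (simp add: psi1_eq psi1_ub_def field_simps)
qed

lemma psi2_bounds:
  assumes "1 < x"
  shows "pi * psi2_lb x \<le> psi2 x" "psi2 x \<le> pi * psi2_ub x"
proof -
  have n: "0 \<le> 1 - 1 / x\<^sup>2" "1 - 1 / x\<^sup>2 < 1" using assms by auto
  define N where "N = 3/2 * (1 - 1 / x\<^sup>2)\<^sup>2"
  have N: "0 \<le> N" by (simp add: N_def)
  have psi2: "psi2 x = N * elliptic_moment 4 (-1/2) (1 - 1 / x\<^sup>2)"
    by (simp add: psi2_eq phi2_def N_def)
  have "pi * psi2_lb x = N * (3*pi/16 + (1 - 1 / x\<^sup>2) * (5*pi/64))"
    by (simp add: psi2_lb_def N_def algebra_simps)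
  also have "\<dots> \<le> psi2 x"
    unfolding psi2 using elliptic_moment_4_bounds(1)[OF n] N by (rule mult_left_mono)
  finally show "pi * psi2_lb x \<le> psi2 x" .
  have "psi2 x \<le> N * (3*pi/16 / sqrt (1 - (1 - 1 / x\<^sup>2)))"
    unfolding psi2 using elliptic_moment_4_bounds(2)[OF n] N by (rule mult_left_mono)
  also have "\<dots> = pi * psi2_ub x"
    using assms by (simp add: psi2_ub_def N_def real_sqrt_divide)
  finally show "psi2 x \<le> pi * psi2_ub x" .
qed

lemma psi_bounds_mono:
  assumes "1 \<le> x" "x \<le> y"
  shows "psi1_ub x \<le> psi1_ub y" "psi2_lb x \<le> psi2_lb y" "psi2_ub x \<le> psi2_ub y"
proof -
  have inv: "1 / y\<^sup>2 \<le> 1 / x\<^sup>2" using assms by (intro divide_left_mono power_mono) auto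
  have n: "0 \<le> 1 - 1 / x\<^sup>2" "1 - 1 / x\<^sup>2 \<le> 1 - 1 / y\<^sup>2" using assms inv by auto
  have n2: "(1 - 1 / x\<^sup>2)\<^sup>2 \<le> (1 - 1 / y\<^sup>2)\<^sup>2" by (rule power_mono[OF n(2) n(1)])
  show "psi1_ub x \<le> psi1_ub y" using inv by (simp add: psi1_ub_def)
  show "psi2_lb x \<le> psi2_lb y"
    unfolding psi2_lb_def using n n2 by (intro mult_mono mult_left_mono) auto
  show "psi2_ub x \<le> psi2_ub y"
    unfolding psi2_ub_def using n2 assms by (intro mult_mono mult_left_mono) auto
qed

lemma cubic_estimate:
  fixes p1 p2 a b g e d X Y C :: real
  assumes p1: "0 \<le> p1" "p1 \<le> g * pi" and p2: "a * pi \<le> p2" "p2 \<le> b * pi"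
    and "0 < a" "0 \<le> X" "X \<le> e" "0 \<le> d" "d \<le> Y" "3 \<le> C"
    and certificate: "pi\<^sup>2 * (e * g * (a * b + g\<^sup>2)) \<le> 21 * a * d"
  shows "X * (p1\<^sup>2 + p2\<^sup>2) * p1 \<le> 7 * C * Y * p2"
proof -
  have "0 < a * pi" using \<open>0 < a\<close> by simp
  then have "0 \<le> p2" using p2(1) by linarith
  have "0 \<le> g * pi" using p1 by linarith
  then have "0 \<le> g" using pi_gt_zero by (simp add: zero_le_mult_iff)
  have "0 \<le> e" using \<open>0 \<le> X\<close> \<open>X \<le> e\<close> by linarith
  have "p1\<^sup>2 + p2\<^sup>2 \<le> (g * pi)\<^sup>2 + p2 * (b * pi)"
    using power_mono[OF p1(2) p1(1), of 2] mult_left_mono[OF p2(2) \<open>0 \<le> p2\<close>]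
    by (simp add: power2_eq_square)
  moreover have "0 \<le> p1\<^sup>2 + p2\<^sup>2" by simp
  ultimately have "0 \<le> e * ((g * pi)\<^sup>2 + p2 * (b * pi))"
    using \<open>0 \<le> e\<close> by (intro mult_nonneg_nonneg) linarith+
  with \<open>p1\<^sup>2 + p2\<^sup>2 \<le> _\<close>
  have "X * (p1\<^sup>2 + p2\<^sup>2) * p1 \<le> e * ((g * pi)\<^sup>2 + p2 * (b * pi)) * (g * pi)"
    using assms by (intro mult_mono) auto
  also have "\<dots> = pi * (e * g ^ 3 * pi\<^sup>2) + p2 * (pi\<^sup>2 * e * g * b)"
    by (simp add: algebra_simps power2_eq_square power3_eq_cube)
  also have "\<dots> \<le> p2 / a * (e * g ^ 3 * pi\<^sup>2) + p2 * (pi\<^sup>2 * e * g * b)"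
    using p2(1) \<open>0 < a\<close> \<open>0 \<le> g\<close> \<open>0 \<le> e\<close>
    by (intro add_right_mono mult_right_mono) (auto simp: field_simps)
  also have "\<dots> = p2 / a * (pi\<^sup>2 * (e * g * (a * b + g\<^sup>2)))"
    using \<open>0 < a\<close> by (simp add: field_simps power2_eq_square power3_eq_cube)
  also have "\<dots> \<le> p2 / a * (21 * a * d)"
    using certificate \<open>0 \<le> p2\<close> \<open>0 < a\<close> by (intro mult_left_mono) auto
  also have "\<dots> \<le> 7 * C * Y * p2"
    using \<open>0 \<le> p2\<close> \<open>0 < a\<close> assms by (simp add: mult_mono mult_right_mono)
  finally show ?thesis .
qed

lemma cubic_estimate_on_interval:
  assumes "cubic_certificate x0 x1" "1 < x0" "x0 \<le> x" "x \<le> x1" "3 \<le> x\<^sup>2" "3 \<le> C"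
    and "0 \<le> p1" "p1 \<le> pi * psi1_ub x" "pi * psi2_lb x \<le> p2" "p2 \<le> pi * psi2_ub x"
  shows "(x\<^sup>2 - 3) * (p1\<^sup>2 + p2\<^sup>2) * p1 \<le> 7 * C * ((x\<^sup>2 - 1)\<^sup>2 / x\<^sup>2) * p2"
proof (rule cubic_estimate)
  have mono: "psi1_ub x \<le> psi1_ub x1" "psi2_lb x0 \<le> psi2_lb x" "psi2_ub x \<le> psi2_ub x1"
    using psi_bounds_mono assms by auto
  then have "pi * psi1_ub x \<le> pi * psi1_ub x1" "pi * psi2_lb x0 \<le> pi * psi2_lb x"
    "pi * psi2_ub x \<le> pi * psi2_ub x1" by simp_all
  then show "p1 \<le> psi1_ub x1 * pi" "psi2_lb x0 * pi \<le> p2" "p2 \<le> psi2_ub x1 * pi"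
    using assms(8-10) by (simp_all only: mult.commute[of _ pi])
  have "0 < 1 - 1 / x0\<^sup>2" using assms(2) by simp
  then show "0 < psi2_lb x0" unfolding psi2_lb_def by (intro mult_pos_pos add_pos_nonneg) auto
  show "x\<^sup>2 - 3 \<le> x1\<^sup>2 - 3" using assms by (simp add: power_mono)
  have "1 / x0 < 1" "1 / x \<le> 1 / x0" using assms by (auto intro: divide_left_mono)
  then have "x0 - 1 / x0 \<le> x - 1 / x" "0 \<le> x0 - 1 / x0" using assms by linarith+
  then have "(x0 - 1 / x0)\<^sup>2 \<le> (x - 1 / x)\<^sup>2" by (rule power_mono)
  also have "(x - 1 / x)\<^sup>2 = (x\<^sup>2 - 1)\<^sup>2 / x\<^sup>2" using assms by (simp add: field_simps power2_eq_square)
  finally show "(x0 - 1 / x0)\<^sup>2 \<le> (x\<^sup>2 - 1)\<^sup>2 / x\<^sup>2" .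
  have "1 \<le> x1\<^sup>2" using assms by (simp add: one_le_power)
  then have "1 / (2 * x1\<^sup>2) \<le> 1" by (simp add: divide_le_eq)
  then have "0 \<le> psi1_ub x1" by (simp add: psi1_ub_def)
  have "0 \<le> psi2_ub x1" using assms by (simp add: psi2_ub_def)
  have "0 \<le> x1\<^sup>2 - 3" using \<open>x\<^sup>2 - 3 \<le> x1\<^sup>2 - 3\<close> assms(5) by linarith
  have "0 \<le> (x1\<^sup>2 - 3) * psi1_ub x1 * (psi2_lb x0 * psi2_ub x1 + (psi1_ub x1)\<^sup>2)"
    using \<open>0 \<le> x1\<^sup>2 - 3\<close> \<open>0 < psi2_lb x0\<close> \<open>0 \<le> psi1_ub x1\<close> \<open>0 \<le> psi2_ub x1\<close>
    by (intro mult_nonneg_nonneg add_nonneg_nonneg) auto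
  moreover have "pi\<^sup>2 \<le> (31416/10000)\<^sup>2" using pi_approx by (intro power_mono) auto
  ultimately show "pi\<^sup>2 * ((x1\<^sup>2 - 3) * psi1_ub x1 * (psi2_lb x0 * psi2_ub x1 + (psi1_ub x1)\<^sup>2))
      \<le> 21 * psi2_lb x0 * (x0 - 1 / x0)\<^sup>2"
    using assms(1) unfolding cubic_certificate_def by (meson mult_right_mono order_trans)
qed (use assms in auto)

lemma consecutive_interval_cover:
  fixes x :: "'a :: linorder"
  assumes "a \<le> x" "x \<le> last (a # ts)" "ts \<noteq> []"
  shows "\<exists>(l, u) \<in> set (zip (a # ts) ts). l \<le> x \<and> x \<le> u"
  using assms
proof (induction ts arbitrary: a)
  case (Cons t ts)
  show ?case
  proof (cases "x \<le> t")
    case False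
    with Cons.prems have "t \<le> x" "x \<le> last (t # ts)" "ts \<noteq> []" by (auto split: if_splits)
    from Cons.IH[OF this] show ?thesis by auto
  qed (use Cons.prems in auto)
qed simp

lemma cubic_estimate_sqrt3_5:
  assumes "3 \<le> x\<^sup>2" "x \<le> 5" "0 < x" "3 \<le> C"
    and "0 \<le> p1" "p1 \<le> pi * psi1_ub x" "pi * psi2_lb x \<le> p2" "p2 \<le> pi * psi2_ub x"
  shows "(x\<^sup>2 - 3) * (p1\<^sup>2 + p2\<^sup>2) * p1 \<le> 7 * C * ((x\<^sup>2 - 1)\<^sup>2 / x\<^sup>2) * p2"
proof -
  have "173/100 \<le> x"
  proof (rule ccontr)
    assume "\<not> 173/100 \<le> x"
    then have "x\<^sup>2 < (173/100)\<^sup>2" using assms(3) by (intro power_strict_mono) auto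
    with assms(1) show False by (simp add: power2_eq_square)
  qed
  moreover have "cubic_breakpoints = 173/100 # tl cubic_breakpoints" "last cubic_breakpoints = 5"
    "tl cubic_breakpoints \<noteq> []" by (simp_all add: cubic_breakpoints_def)
  ultimately have "\<exists>(l, u) \<in> set (zip cubic_breakpoints (tl cubic_breakpoints)). l \<le> x \<and> x \<le> u"
    using consecutive_interval_cover[of "173/100" x "tl cubic_breakpoints"] assms(2) by simp
  then obtain l u where lu: "(l, u) \<in> set (zip cubic_breakpoints (tl cubic_breakpoints))" "l \<le> x" "x \<le> u"
    by blast
  then have "1 < l" "cubic_certificate l u" using cubic_breakpoints_certified by auto
  with lu assms show ?thesis by (intro cubic_estimate_on_interval) auto
qed

lemma psi_cubic_inequality:
  assumes "1 < x" "x \<le> 5" "3 \<le> C"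
  shows "0 \<le> (3 - x\<^sup>2) * ((psi1 x)\<^sup>2 + (psi2 x)\<^sup>2) * psi1 x + 7 * C * ((x\<^sup>2 - 1)\<^sup>2 / x\<^sup>2) * psi2 x"
proof -
  have "0 < 1 - 1 / x\<^sup>2" using assms by simp
  then have "0 < pi * psi2_lb x" unfolding psi2_lb_def by (intro mult_pos_pos add_pos_nonneg) auto
  then have "0 \<le> psi2 x" using psi2_bounds(1)[OF assms(1)] by linarith
  then have C: "0 \<le> 7 * C * ((x\<^sup>2 - 1)\<^sup>2 / x\<^sup>2) * psi2 x" using assms by simp
  show ?thesis
  proof (cases "x\<^sup>2 \<le> 3")
    case True
    then show ?thesis using psi1_bounds(1)[OF assms(1)] C by simp
  next
    case False
    then show ?thesis
      using cubic_estimate_sqrt3_5[of x C "psi1 x" "psi2 x"] assms psi1_bounds[OF assms(1)]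
        psi2_bounds[OF assms(1)]
      by (simp add: algebra_simps)
  qed
qed

lemma has_derivative_mult_sqrt_sum_sq_power:
  fixes f1 f2 h :: "real \<Rightarrow> real"
  assumes "(f1 has_real_derivative d1) (at x)" "(f2 has_real_derivative d2) (at x)"
    and "(h has_real_derivative dh) (at x)" "0 < (f1 x)\<^sup>2 + (f2 x)\<^sup>2"
  shows "((\<lambda>x. h x * sqrt ((f1 x)\<^sup>2 + (f2 x)\<^sup>2) ^ (k + 2)) has_real_derivative
      sqrt ((f1 x)\<^sup>2 + (f2 x)\<^sup>2) ^ k * (dh * ((f1 x)\<^sup>2 + (f2 x)\<^sup>2)
        + (real k + 2) * h x * (f1 x * d1 + f2 x * d2))) (at x)"
proof -
  define P where "P x = (f1 x)\<^sup>2 + (f2 x)\<^sup>2" for x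
  have "(P has_real_derivative 2 * (f1 x * d1 + f2 x * d2)) (at x)"
    unfolding P_def using assms by (auto intro!: derivative_eq_intros simp: algebra_simps)
  from DERIV_chain2[OF DERIV_real_sqrt this] assms(4)
  have "((\<lambda>x. sqrt (P x)) has_real_derivative inverse (sqrt (P x)) / 2 * (2 * (f1 x * d1 + f2 x * d2))) (at x)"
    by (simp add: P_def)
  from DERIV_mult[OF assms(3) DERIV_chain2[OF DERIV_pow this, of "k + 2"]]
  have "((\<lambda>x. h x * sqrt (P x) ^ (k + 2)) has_real_derivative
      sqrt (P x) ^ k * (dh * P x + (real k + 2) * h x * (f1 x * d1 + f2 x * d2))) (at x)"
  proof (rule DERIV_cong)
    have "0 < sqrt (P x)" "sqrt (P x) * sqrt (P x) = P x" using assms(4) by (auto simp: P_def)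
    then show "dh * sqrt (P x) ^ (k + 2) + real (k + 2) * sqrt (P x) ^ (k + 2 - Suc 0)
        * (inverse (sqrt (P x)) / 2 * (2 * (f1 x * d1 + f2 x * d2))) * h x
      = sqrt (P x) ^ k * (dh * P x + (real k + 2) * h x * (f1 x * d1 + f2 x * d2))"
      by (simp add: field_simps power_add)
  qed
  then show ?thesis unfolding P_def .
qed

lemma omega_pplus_has_derivative:
  assumes "1 < x" and C: "\<And>x. 1 < x \<Longrightarrow> omega x = C * (x\<^sup>2 - 1) / x ^ 3"
    and d1: "(psi1 has_real_derivative d1) (at x)" and d2: "(psi2 has_real_derivative d2) (at x)"
  shows "((\<lambda>x. omega x * pplus x ^ 7) has_real_derivative
      pplus x ^ 5 * (C * (3 - x\<^sup>2) / x ^ 4 * ((psi1 x)\<^sup>2 + (psi2 x)\<^sup>2)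
        + 7 * omega x * (psi1 x * d1 + psi2 x * d2))) (at x)"
proof -
  have "((\<lambda>x. C * (x\<^sup>2 - 1) / x ^ 3) has_real_derivative C * (3 - x\<^sup>2) / x ^ 4) (at x)"
    using assms by (auto intro!: derivative_eq_intros simp: field_simps eval_nat_numeral)
  from has_derivative_mult_sqrt_sum_sq_power[OF d1 d2 this, of 5] psi1_bounds(1)[OF assms(1)]
  have "((\<lambda>x. C * (x\<^sup>2 - 1) / x ^ 3 * pplus x ^ 7) has_real_derivative
      pplus x ^ 5 * (C * (3 - x\<^sup>2) / x ^ 4 * ((psi1 x)\<^sup>2 + (psi2 x)\<^sup>2)
        + 7 * (C * (x\<^sup>2 - 1) / x ^ 3) * (psi1 x * d1 + psi2 x * d2))) (at x)"
    by (simp add: pplus_def numeral_eq_Suc add_pos_nonneg)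
  then show ?thesis
    unfolding C[OF assms(1)]
    by (rule has_field_derivative_transform_within_open[where S = "{1<..}"]) (use C assms(1) in auto)
qed

lemma omega_pplus_derivative_factor_nonneg:
  assumes x: "1 < x" "x \<le> 5" and C: "3 \<le> C" "omega x = C * (x\<^sup>2 - 1) / x ^ 3"
    and d1: "(psi1 has_real_derivative d1) (at x)" "0 \<le> d1"
    and d2: "(psi2 has_real_derivative d2) (at x)"
  shows "0 \<le> C * (3 - x\<^sup>2) / x ^ 4 * ((psi1 x)\<^sup>2 + (psi2 x)\<^sup>2) + 7 * omega x * (psi1 x * d1 + psi2 x * d2)"
proof -
  define P where "P = (psi1 x)\<^sup>2 + (psi2 x)\<^sup>2"
  have wronskian: "omega x = d2 * psi1 x - psi2 x * d1"
    using vector_derivative_within_atLeast[OF d1(1)] vector_derivative_within_atLeast[OF d2] x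
    by (simp add: omega_def)
  have omega_sq: "(omega x)\<^sup>2 = C / x ^ 4 * (C * ((x\<^sup>2 - 1)\<^sup>2 / x\<^sup>2))"
    using x unfolding C(2) by (simp add: field_simps eval_nat_numeral)
  have "psi1 x * (C * (3 - x\<^sup>2) / x ^ 4 * P + 7 * omega x * (psi1 x * d1 + psi2 x * d2))
      = C * (3 - x\<^sup>2) / x ^ 4 * P * psi1 x + 7 * omega x * d1 * P
        + 7 * omega x * (d2 * psi1 x - psi2 x * d1) * psi2 x"
    by (simp add: P_def algebra_simps power2_eq_square)
  also have "\<dots> = C * (3 - x\<^sup>2) / x ^ 4 * P * psi1 x + 7 * (omega x)\<^sup>2 * psi2 x + 7 * omega x * d1 * P"
    unfolding wronskian[symmetric] by (simp add: power2_eq_square)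
  also have "\<dots> = C / x ^ 4 * ((3 - x\<^sup>2) * P * psi1 x + 7 * C * ((x\<^sup>2 - 1)\<^sup>2 / x\<^sup>2) * psi2 x)
      + 7 * omega x * d1 * P"
    unfolding omega_sq using x by (simp add: field_simps power2_eq_square eval_nat_numeral)
  also have "0 \<le> \<dots>"
  proof (rule add_nonneg_nonneg)
    show "0 \<le> C / x ^ 4 * ((3 - x\<^sup>2) * P * psi1 x + 7 * C * ((x\<^sup>2 - 1)\<^sup>2 / x\<^sup>2) * psi2 x)"
      using psi_cubic_inequality[OF x C(1)] C(1) x unfolding P_def
      by (intro mult_nonneg_nonneg) auto
    have "0 \<le> omega x" using omega_nonneg x by simp
    then show "0 \<le> 7 * omega x * d1 * P" using d1(2) by (simp add: P_def)
  qed
  finally show ?thesis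
    using psi1_bounds(1)[OF x(1)] by (simp add: P_def zero_le_mult_iff)
qed

lemma omega_pplus_has_nonneg_derivative:
  assumes "1 < x" "x \<le> 5"
  shows "\<exists>D. ((\<lambda>x. omega x * pplus x ^ 7) has_real_derivative D) (at x) \<and> 0 \<le> D"
proof -
  obtain C where C: "3 \<le> C" "\<And>x. 1 < x \<Longrightarrow> omega x = C * (x\<^sup>2 - 1) / x ^ 3"
    using omega_closed_form by blast
  define d1 where "d1 = - 3 / x ^ 3 * dphi1 (1 / x\<^sup>2)"
  define d2 where "d2 = - 3 / x ^ 3 * dphi2 (1 / x\<^sup>2)"
  have "dphi1 (1 / x\<^sup>2) \<le> 0" using dphi1_bounds(2)[of "1 / x\<^sup>2"] assms by simp
  then have d1: "(psi1 has_real_derivative d1) (at x)" "0 \<le> d1"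
    using psi1_has_derivative[OF assms(1)] assms by (auto simp: d1_def intro!: divide_nonpos_pos)
  have d2: "(psi2 has_real_derivative d2) (at x)"
    using psi2_has_derivative assms by (simp add: d2_def)
  show ?thesis
    using omega_pplus_has_derivative[OF assms(1) C(2) d1(1) d2]
      omega_pplus_derivative_factor_nonneg[OF assms C(1) C(2)[OF assms(1)] d1 d2]
    by (auto simp: pplus_def)
qed

theorem mainTheorem11:
  shows "mono_on {1..5::real} (\<lambda>x. omega x * pplus x ^ 7)"
proof (rule mono_onI)
  fix r s :: real
  assume rs: "r \<in> {1..5}" "s \<in> {1..5}" "r \<le> s"
  show "omega r * pplus r ^ 7 \<le> omega s * pplus s ^ 7"
  proof (cases "r = 1")
    case True
    have "0 \<le> omega s * pplus s ^ 7" using omega_nonneg rs(2) by (simp add: pplus_def)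
    with True show ?thesis by (simp add: omega_1)
  next
    case False
    with rs have "1 < r" by simp
    with rs show ?thesis
      by (intro DERIV_nonneg_imp_nondecreasing[OF rs(3)] omega_pplus_has_nonneg_derivative) auto
  qed
qed

end
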